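(* Let $l\in\mathbb{N}$ and, for $\alpha\in\mathcal{E}$, put $\Phi(\alpha)=\omega^3\cdot\alpha+\omega^3+l+2$. Let $E(x)=2^{2^{2^x}}$. Suppose $X=\{x_0<\dots<x_{|X|-1}\}$ is a finite set of natural numbers, all greater than $2$, which is $\Phi(\gamma_0)$-large. Suppose $\gamma_0>\gamma_1>\dots>\gamma_j$ are in $\mathcal{E}$ and $\mathrm{MC}(\gamma_i)\leq E(x_i+l)$ holds for every $i\leq j$ for which $x_i$ is defined (i.e. $i\leq|X|-1$). Then $j\leq|X|-1$.
   Context: $\mathcal{E}$ is the set of ordinal notations below $\varepsilon_0$: formal sums $\omega^{\alpha_0}+\dots+\omega^{\alpha_n}$ with $\alpha_0\geq\dots\geq\alpha_n\in\mathcal{E}$ (the empty sum is $0$). The order is lexicographic: $\omega^{\alpha_0}+\dots+\omega^{\alpha_n}<\omega^{\beta_0}+\dots+\omega^{\beta_m}$ iff either $n<m$ and $\alpha_i=\beta_i$ for all $i\leq n$, or there is $i\leq\min\{n,m\}$ with $\alpha_j=\beta_j$ for $j<i$ and $\alpha_i<\beta_i$. Here $1=\omega^0$, $k=1+\dots+1$, $\omega=\omega^1$; $+$ and $\cdot$ are the usual ordinal addition and multiplication on notations. Every $\alpha$ has a Cantor normal form $\omega^{\alpha_0}a_0+\dots+\omega^{\alpha_n}a_n$ with $\alpha_0>\dots>\alpha_n$ and positive integers $a_i$. The maximal coefficient is $\mathrm{MC}(0)=0$ and $\mathrm{MC}(\alpha)=\max_i\{a_i,\mathrm{MC}(\alpha_i)\}$.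 Fundamental sequences, for $\alpha=\omega^{\alpha_0}+\dots+\omega^{\alpha_n}$ and $x\in\mathbb{N}$: $0[x]=0$. If $\alpha_n=0$ then $\alpha[x]=\omega^{\alpha_0}+\dots+\omega^{\alpha_{n-1}}$. If $\alpha_n=\beta+1$ then $\alpha[x]=\omega^{\alpha_0}+\dots+\omega^{\alpha_{n-1}}+\omega^\beta\cdot x$. If $\alpha_n$ is a nonzero non-successor then $\alpha[x]=\omega^{\alpha_0}+\dots+\omega^{\alpha_{n-1}}+\omega^{\alpha_n[x]}$. A finite set $X=\{x_0<\dots<x_{|X|-1}\}$ is $\alpha$-large if $\alpha[x_0][x_1]\cdots[x_{|X|-1}]=0$. *)

theory Defs
  imports Main
begin

text \<open>Ordinal notations below epsilon_0: a notation Os [a0,...,an] denotes the formal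
  sum omega^a0 + ... + omega^an.  Well-formedness (wf_ord) requires a0 >= ... >= an,
  recursively.\<close>

datatype ord = Os "ord list"

fun olt :: "ord \<Rightarrow> ord \<Rightarrow> bool" where
  "olt (Os []) (Os []) = False"
| "olt (Os []) (Os (b # bs)) = True"
| "olt (Os (a # as)) (Os []) = False"
| "olt (Os (a # as)) (Os (b # bs)) = (olt a b \<or> (a = b \<and> olt (Os as) (Os bs)))"

fun wf_ord :: "ord \<Rightarrow> bool" where
  "wf_ord (Os []) = True"
| "wf_ord (Os [a]) = wf_ord a"
| "wf_ord (Os (a # b # bs)) = (wf_ord a \<and> \<not> olt a b \<and> wf_ord (Os (b # bs)))"

definition ozero :: ord where "ozero = Os []"

definition onat :: "nat \<Rightarrow> ord" where "onat k = Os (replicate k (Os []))"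

definition oomega :: ord where "oomega = Os [onat 1]"

definition oomega3 :: ord where "oomega3 = Os [onat 3]"

fun oadd :: "ord \<Rightarrow> ord \<Rightarrow> ord" where
  "oadd (Os as) (Os []) = Os as"
| "oadd (Os as) (Os (b # bs)) = Os (takeWhile (\<lambda>a. \<not> olt a b) as @ b # bs)"

text \<open>Ordinal multiplication on notations:
  alpha * (omega^b0 + ... + omega^bm) = alpha*omega^b0 + ... + alpha*omega^bm, where
  alpha * omega^0 = alpha and alpha * omega^b = omega^(a0 + b) for b > 0, alpha > 0.\<close>
definition omul_pow :: "ord \<Rightarrow> ord \<Rightarrow> ord list" where
  "omul_pow \<alpha> b = (case \<alpha> of Os [] \<Rightarrow> []
      | Os (a # as) \<Rightarrow> (if b = Os [] then a # as else [oadd a b]))"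

fun omul :: "ord \<Rightarrow> ord \<Rightarrow> ord" where
  "omul \<alpha> (Os bs) = Os (concat (map (omul_pow \<alpha>) bs))"

fun mc :: "ord \<Rightarrow> nat" where
  "mc (Os as) = fold max (map (\<lambda>a. max (count_list as a) (mc a)) as) 0"

function fs :: "ord \<Rightarrow> nat \<Rightarrow> ord" where
  "fs (Os as) x =
     (if as = [] then Os []
      else (case last as of
              Os bs \<Rightarrow>
                (if bs = [] then Os (butlast as)
                 else if last bs = Os [] then Os (butlast as @ replicate x (Os (butlast bs)))
                 else Os (butlast as @ [fs (last as) x]))))"
  by pat_completeness auto
termination
  apply (relation "measure (\<lambda>(a, x). size a)")
   apply simp
  apply clarsimp
  subgoal for as xa
    using size_list_estimation'[of "last as" as "size (last as)" size] last_in_set[of as]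
    by simp
  done

definition fs_iter :: "ord \<Rightarrow> nat list \<Rightarrow> ord" where
  "fs_iter \<alpha> xs = foldl fs \<alpha> xs"

definition large :: "ord \<Rightarrow> nat set \<Rightarrow> bool" where
  "large \<alpha> X \<longleftrightarrow> fs_iter \<alpha> (sorted_list_of_set X) = Os []"

definition Phi :: "nat \<Rightarrow> ord \<Rightarrow> ord" where
  "Phi l \<alpha> = oadd (oadd (oadd (omul oomega3 \<alpha>) oomega3) (onat l)) (onat 2)"

definition E :: "nat \<Rightarrow> nat" where
  "E x = 2 ^ (2 ^ (2 ^ x))"

end

theory Submission
  imports Defs
begin

text \<open>Let \<open>x\<^sub>0 < x\<^sub>1 < \<dots>\<close> enumerate \<open>X\<close>. By induction on \<open>i \<le> j\<close>, some tail
  \<open>x\<^sub>k, x\<^sub>k\<^sub>+\<^sub>1, \<dots>\<close> with \<open>k \<ge> i\<close> is \<open>\<Phi>(\<gamma>\<^sub>i)\<close>-large.  In the step,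
  the tail first uses up the summand \<open>l + 2\<close>, then turns \<open>\<omega>\<^sup>3\<close> into \<open>\<omega>\<^sup>2 \<cdot> u\<close>
  with \<open>u > x\<^sub>i\<^sub>+\<^sub>1 + l\<close>.  Using up three copies of \<open>\<omega>\<^sup>2\<close> exponentiates the
  size of the elements three times, so all remaining elements exceed \<open>E(u + 1)\<close>.  Now
  \<open>\<Phi>(\<gamma>\<^sub>i\<^sub>+\<^sub>1) < \<omega>\<^sup>3 \<cdot> \<gamma>\<^sub>i + \<omega>\<^sup>2 \<cdot> (u - 3)\<close> and
  \<open>MC(\<Phi>(\<gamma>\<^sub>i\<^sub>+\<^sub>1)) \<le> E(x\<^sub>i\<^sub>+\<^sub>1 + l) + 4 < E(u + 1)\<close>, so by the Bachmann
  property (\<open>\<beta> < \<alpha>\<close> and \<open>MC(\<beta>) < x\<close> imply \<open>\<beta> \<le> \<alpha>[x]\<close>) the remaining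
  elements form a \<open>\<Phi>(\<gamma>\<^sub>i\<^sub>+\<^sub>1)\<close>-large set.  Since \<open>\<Phi>(\<gamma>\<^sub>j) \<noteq> 0\<close>, the tail for
  \<open>j\<close> is nonempty, hence \<open>j < |X|\<close>.\<close>

section \<open>The order on notations\<close>

fun lexlt :: "ord list \<Rightarrow> ord list \<Rightarrow> bool" where
  "lexlt [] [] = False"
| "lexlt [] (b # bs) = True"
| "lexlt (a # as) [] = False"
| "lexlt (a # as) (b # bs) = (olt a b \<or> (a = b \<and> lexlt as bs))"

abbreviation ole :: "ord \<Rightarrow> ord \<Rightarrow> bool" where
  "ole a b \<equiv> a = b \<or> olt a b"

lemma olt_Os: "olt (Os as) (Os bs) = lexlt as bs"
  by (induction as bs rule: lexlt.induct) auto

lemma lexlt_Nil_right [simp]: "\<not> lexlt as []"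
  by (cases as) auto

lemma lexlt_Nil_left [simp]: "lexlt [] bs \<longleftrightarrow> bs \<noteq> []"
  by (cases bs) auto

lemma olt_zero_right [simp]: "\<not> olt \<alpha> (Os [])"
  by (cases \<alpha>) (simp add: olt_Os)

lemma olt_zero_left: "\<alpha> \<noteq> Os [] \<Longrightarrow> olt (Os []) \<alpha>"
  by (cases \<alpha>) (auto simp: olt_Os)

lemma olt_irrefl: "\<not> olt \<alpha> \<alpha>"
proof (induction \<alpha>)
  case (Os as)
  then show ?case
    by (induction as) (simp_all add: olt_Os)
qed

lemma lexlt_trans:
  assumes "\<And>a \<beta> \<gamma>. a \<in> set as \<Longrightarrow> olt a \<beta> \<Longrightarrow> olt \<beta> \<gamma> \<Longrightarrow> olt a \<gamma>"
    and "lexlt as bs" and "lexlt bs cs"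
  shows "lexlt as cs"
  using assms
proof (induction as arbitrary: bs cs)
  case Nil
  then show ?case
    by (cases bs; cases cs) auto
next
  case (Cons a as)
  obtain b bs' where b: "bs = b # bs'"
    using Cons.prems(2) by (cases bs) auto
  obtain c cs' where c: "cs = c # cs'"
    using Cons.prems(3) b by (cases cs) auto
  have "olt a b \<Longrightarrow> olt b c \<Longrightarrow> olt a c"
    using Cons.prems(1)[of a b c] by simp
  moreover have "lexlt as bs' \<Longrightarrow> lexlt bs' cs' \<Longrightarrow> lexlt as cs'"
    using Cons.IH[of bs' cs'] Cons.prems(1) by simp
  ultimately show ?case
    using Cons.prems(2,3) b c by auto
qed

lemma olt_trans: "olt \<alpha> \<beta> \<Longrightarrow> olt \<beta> \<gamma> \<Longrightarrow> olt \<alpha> \<gamma>"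
proof (induction \<alpha> arbitrary: \<beta> \<gamma>)
  case (Os as)
  obtain bs where \<beta>: "\<beta> = Os bs"
    by (cases \<beta>) auto
  obtain cs where \<gamma>: "\<gamma> = Os cs"
    by (cases \<gamma>) auto
  show ?case
    using lexlt_trans[of as bs cs] Os \<beta> \<gamma> by (simp add: olt_Os)
qed

lemma lexlt_total:
  assumes "\<And>a \<beta>. a \<in> set as \<Longrightarrow> olt a \<beta> \<or> a = \<beta> \<or> olt \<beta> a"
  shows "lexlt as bs \<or> as = bs \<or> lexlt bs as"
  using assms
proof (induction as arbitrary: bs)
  case (Cons a as)
  show ?case
  proof (cases bs)
    case (Cons b bs')
    have "olt a b \<or> a = b \<or> olt b a"
      using Cons.prems(1)[of a b] by simp
    moreover have "lexlt as bs' \<or> as = bs' \<or> lexlt bs' as"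
      using Cons.IH[of bs'] Cons.prems(1) by simp
    ultimately show ?thesis
      using Cons by auto
  qed simp
qed (cases bs; simp)

lemma olt_total: "olt \<alpha> \<beta> \<or> \<alpha> = \<beta> \<or> olt \<beta> \<alpha>"
proof (induction \<alpha> arbitrary: \<beta>)
  case (Os as)
  obtain bs where \<beta>: "\<beta> = Os bs"
    by (cases \<beta>) auto
  show ?case
    using lexlt_total[of as bs] Os \<beta> by (auto simp: olt_Os)
qed

lemma not_olt_trans: "\<not> olt \<alpha> \<beta> \<Longrightarrow> \<not> olt \<beta> \<gamma> \<Longrightarrow> \<not> olt \<alpha> \<gamma>"
  using olt_total olt_trans by blast

lemma lexlt_append_same [simp]: "lexlt (p @ as) (p @ bs) = lexlt as bs"
  by (induction p) (auto simp: olt_irrefl)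

lemma lexlt_append_left [simp]: "lexlt as (as @ bs) \<longleftrightarrow> bs \<noteq> []"
  using lexlt_append_same[of as "[]" bs] by simp

lemma lexlt_append_right: "lexlt as bs \<Longrightarrow> lexlt as (bs @ cs)"
  by (induction bs arbitrary: as) (auto elim: lexlt.elims)

lemma lexlt_append_split:
  "lexlt as (bs @ cs) \<Longrightarrow> lexlt as bs \<or> (\<exists>ds. as = bs @ ds \<and> lexlt ds cs)"
proof (induction bs arbitrary: as)
  case (Cons b bs)
  then show ?case
    by (cases as) auto
qed simp

lemma lexlt_snoc_cases:
  assumes "lexlt bs (as @ [c])"
  obtains "lexlt bs as" | "bs = as" | d ds where "bs = as @ d # ds" and "olt d c"
proof -
  have "lexlt bs as \<or> (\<exists>ds. bs = as @ ds \<and> lexlt ds [c])"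
    using assms by (rule lexlt_append_split)
  moreover have "ds = [] \<or> (\<exists>d ds'. ds = d # ds' \<and> olt d c)" if "lexlt ds [c]" for ds
    using that by (cases ds) auto
  ultimately show ?thesis
    using that by blast
qed

lemma lexlt_snoc_zero: "lexlt as bs \<Longrightarrow> as @ [Os []] = bs \<or> lexlt (as @ [Os []]) bs"
proof (induction as arbitrary: bs)
  case Nil
  then obtain b bs' where "bs = b # bs'"
    by (cases bs) auto
  then show ?case
    by (cases "b = Os []") (auto intro: olt_zero_left)
next
  case (Cons a as)
  then show ?case
    by (cases bs) auto
qed

lemma lexlt_map:
  assumes "\<And>a b. olt a b \<Longrightarrow> olt (f a) (f b)" and "lexlt as bs"
  shows "lexlt (map f as) (map f bs)"
  using assms(2)
proof (induction as arbitrary: bs)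
  case (Cons a as)
  then show ?case
    using assms(1) by (cases bs) auto
qed (auto simp: neq_Nil_conv)

lemma lexlt_append_below:
  assumes "as = bs \<or> lexlt as bs" and "cs \<noteq> []" and "\<forall>b\<in>set (bs @ cs). olt z b"
  shows "lexlt (as @ z # ds) (bs @ cs)"
  using assms
proof (induction as arbitrary: bs)
  case Nil
  then show ?case
    by (cases "bs @ cs") auto
next
  case (Cons a as)
  then obtain b bs' where "bs = b # bs'"
    by (cases bs) auto
  with Cons show ?case
    by auto
qed

lemma wf_ord_Os_iff:
  "wf_ord (Os as) \<longleftrightarrow> (\<forall>a\<in>set as. wf_ord a) \<and> sorted_wrt (\<lambda>a b. \<not> olt a b) as"
  by (induction as rule: induct_list012) (auto dest: not_olt_trans)

lemma wf_ord_append_iff: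
  "wf_ord (Os (as @ bs)) \<longleftrightarrow>
     wf_ord (Os as) \<and> wf_ord (Os bs) \<and> (\<forall>a\<in>set as. \<forall>b\<in>set bs. \<not> olt a b)"
  unfolding wf_ord_Os_iff by (auto simp: sorted_wrt_append)

lemma wf_ord_Os_elem: "wf_ord (Os as) \<Longrightarrow> a \<in> set as \<Longrightarrow> wf_ord a"
  unfolding wf_ord_Os_iff by auto

lemma wf_ord_replicate: "wf_ord \<alpha> \<Longrightarrow> wf_ord (Os (replicate n \<alpha>))"
  unfolding wf_ord_Os_iff by (induction n) (auto simp: olt_irrefl)

lemma wf_ord_append_zeros: "wf_ord (Os as) \<Longrightarrow> wf_ord (Os (as @ replicate n (Os [])))"
  by (simp add: wf_ord_append_iff wf_ord_replicate)

lemma wf_ord_map: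
  assumes "wf_ord (Os as)" and "\<And>a b. olt a b \<Longrightarrow> olt (f a) (f b)"
    and "\<And>a. wf_ord a \<Longrightarrow> wf_ord (f a)"
  shows "wf_ord (Os (map f as))"
proof -
  have "\<not> olt (f a) (f b)" if "\<not> olt a b" for a b
    using that assms(2) olt_total olt_trans olt_irrefl by metis
  then show ?thesis
    using assms(1,3) by (auto simp: wf_ord_Os_iff sorted_wrt_map elim: sorted_wrt_mono_rel[rotated])
qed

section \<open>Fundamental sequences\<close>

declare fs.simps [simp del]

lemma fs_iter_Nil [simp]: "fs_iter \<alpha> [] = \<alpha>"
  by (simp add: fs_iter_def)

lemma fs_iter_Cons [simp]: "fs_iter \<alpha> (x # xs) = fs_iter (fs \<alpha> x) xs"
  by (simp add: fs_iter_def)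

lemma fs_zero [simp]: "fs (Os []) x = Os []"
  by (simp add: fs.simps)

lemma fs_snoc_zero: "fs (Os (as @ [Os []])) x = Os as"
  by (simp add: fs.simps)

lemma fs_snoc_succ: "fs (Os (as @ [Os (bs @ [Os []])])) x = Os (as @ replicate x (Os bs))"
  by (simp add: fs.simps)

lemma fs_snoc_limit:
  "bs \<noteq> [] \<Longrightarrow> last bs \<noteq> Os [] \<Longrightarrow> fs (Os (as @ [Os bs])) x = Os (as @ [fs (Os bs) x])"
  by (simp add: fs.simps)

lemma Os_snoc_cases:
  assumes "as \<noteq> []"
  obtains (zero) as' where "as = as' @ [Os []]"
  | (succ) as' bs where "as = as' @ [Os (bs @ [Os []])]"
  | (limit) as' bs where "as = as' @ [Os bs]" "bs \<noteq> []" "last bs \<noteq> Os []"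
proof -
  obtain as' bs where as: "as = as' @ [Os bs]"
    using assms by (metis ord.exhaust rev_exhaust)
  show ?thesis
  proof (cases "bs = [] \<or> last bs = Os []")
    case True
    then show ?thesis
      using zero succ as by (metis append_butlast_last_id)
  next
    case False
    then show ?thesis
      using limit as by blast
  qed
qed

lemma fs_iter_zero [simp]: "fs_iter (Os []) zs = Os []"
  by (induction zs) auto

lemma olt_Os_snoc_zero: "olt (Os as) (Os (as @ [Os []]))"
  by (simp add: olt_Os)

lemma olt_Os_snoc_zero_imp_ole:
  assumes "olt \<beta> (Os (as @ [Os []]))"
  shows "ole \<beta> (Os as)"
proof -
  obtain bs where \<beta>: "\<beta> = Os bs"
    by (cases \<beta>) auto
  with assms have "lexlt bs (as @ [Os []])"
    by (simp add: olt_Os)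
  then show ?thesis
    using \<beta> by (cases rule: lexlt_snoc_cases) (auto simp: olt_Os)
qed

lemma olt_fs: "\<alpha> \<noteq> Os [] \<Longrightarrow> olt (fs \<alpha> x) \<alpha>"
proof (induction \<alpha>)
  case (Os as)
  then have "as \<noteq> []"
    by simp
  then show ?case
  proof (cases rule: Os_snoc_cases)
    case (succ as' bs)
    then show ?thesis
      using olt_Os_snoc_zero[of bs] by (cases x) (auto simp: fs_snoc_succ olt_Os)
  next
    case (limit as' bs)
    then show ?thesis
      using Os.IH[of "Os bs"] by (simp add: fs_snoc_limit olt_Os)
  qed (simp add: fs_snoc_zero olt_Os)
qed

lemma wf_ord_fs: "wf_ord \<alpha> \<Longrightarrow> wf_ord (fs \<alpha> x)"
proof (induction \<alpha>)
  case (Os as)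
  show ?case
  proof (cases "as = []")
    case False
    then show ?thesis
    proof (cases rule: Os_snoc_cases)
      case (zero as')
      then show ?thesis
        using Os.prems by (simp add: fs_snoc_zero wf_ord_append_iff)
    next
      case (succ as' bs)
      then have "wf_ord (Os as')" and "wf_ord (Os bs)"
        and "\<forall>a\<in>set as'. \<not> olt a (Os bs)"
        using Os.prems olt_Os_snoc_zero[of bs] by (auto simp: wf_ord_append_iff dest: olt_trans)
      then show ?thesis
        using succ by (simp add: fs_snoc_succ wf_ord_append_iff wf_ord_replicate)
    next
      case (limit as' bs)
      then have "wf_ord (Os as')" and "wf_ord (Os bs)" and "\<forall>a\<in>set as'. \<not> olt a (Os bs)"
        using Os.prems by (auto simp: wf_ord_append_iff)
      moreover have "olt (fs (Os bs) x) (Os bs)"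
        using limit olt_fs by simp
      ultimately show ?thesis
        using limit Os.IH[of "Os bs"] olt_trans
        by (auto simp: fs_snoc_limit wf_ord_append_iff)
    qed
  qed simp
qed

lemma mc_le_iff: "mc (Os as) \<le> m \<longleftrightarrow> (\<forall>a\<in>set as. count_list as a \<le> m \<and> mc a \<le> m)"
proof -
  have "fold max ns k \<le> m \<longleftrightarrow> k \<le> m \<and> (\<forall>n\<in>set ns. n \<le> m)" for ns and k :: nat
    by (induction ns arbitrary: k) auto
  then show ?thesis
    by simp
qed

declare mc.simps [simp del]

lemma count_list_le_mc: "count_list as a \<le> mc (Os as)"
  using mc_le_iff[of as "mc (Os as)"] by (cases "a \<in> set as") (auto simp: count_list_0_iff)

lemma mc_elem_le: "a \<in> set as \<Longrightarrow> mc a \<le> mc (Os as)"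
  using mc_le_iff[of as "mc (Os as)"] by blast

lemma mc_zero [simp]: "mc (Os []) = 0"
  using mc_le_iff[of "[]" 0] by simp

lemma mc_pos: "as \<noteq> [] \<Longrightarrow> 0 < mc (Os as)"
  using count_list_le_mc[of as "hd as"] count_list_0_iff[of as "hd as"] by auto

lemma mc_append_left_le: "mc (Os as) \<le> mc (Os (as @ bs))"
  unfolding mc_le_iff
proof
  fix a
  assume "a \<in> set as"
  moreover have "count_list as a \<le> count_list (as @ bs) a"
    by simp
  ultimately show "count_list as a \<le> mc (Os (as @ bs)) \<and> mc a \<le> mc (Os (as @ bs))"
    using count_list_le_mc[of "as @ bs" a] mc_elem_le[of a "as @ bs"] by simp
qed

lemma mc_append_le: "mc (Os (as @ bs)) \<le> mc (Os as) + mc (Os bs)"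
  unfolding mc_le_iff
proof
  fix a
  assume "a \<in> set (as @ bs)"
  then have "mc a \<le> mc (Os as) + mc (Os bs)"
    using mc_elem_le[of a as] mc_elem_le[of a bs] by auto
  then show "count_list (as @ bs) a \<le> mc (Os as) + mc (Os bs) \<and> mc a \<le> mc (Os as) + mc (Os bs)"
    using count_list_le_mc[of as a] count_list_le_mc[of bs a] by simp
qed

lemma mc_append_disjoint_le:
  assumes "set as \<inter> set bs = {}"
  shows "mc (Os (as @ bs)) \<le> max (mc (Os as)) (mc (Os bs))"
  unfolding mc_le_iff
proof
  fix a
  assume "a \<in> set (as @ bs)"
  then consider "a \<in> set as" "count_list bs a = 0" | "a \<in> set bs" "count_list as a = 0"
    using assms by (auto simp: count_list_0_iff)
  then show "count_list (as @ bs) a \<le> max (mc (Os as)) (mc (Os bs)) \<and> mc a \<le> max (mc (Os as)) (mc (Os bs))"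
    using count_list_le_mc[of as a] count_list_le_mc[of bs a] mc_elem_le[of a]
    by cases (auto simp: le_max_iff_disj)
qed

lemma mc_replicate_le: "mc (Os (replicate n \<alpha>)) \<le> max n (mc \<alpha>)"
proof -
  have "count_list (replicate n \<alpha>) \<alpha> = n"
    by (induction n) auto
  then show ?thesis
    unfolding mc_le_iff by simp
qed

lemma mc_append_replicate_le:
  assumes "\<beta> \<notin> set as"
  shows "mc (Os (as @ replicate n \<beta>)) \<le> max (mc (Os as)) (max n (mc \<beta>))"
proof -
  have "set as \<inter> set (replicate n \<beta>) = {}"
    using assms by auto
  then show ?thesis
    using mc_append_disjoint_le mc_replicate_le max.mono order.refl order.trans by metis
qed

lemma mc_fs_le: "wf_ord \<alpha> \<Longrightarrow> mc (fs \<alpha> x) \<le> max (mc \<alpha>) x"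
proof (induction \<alpha>)
  case (Os as)
  show ?case
  proof (cases "as = []")
    case False
    then show ?thesis
    proof (cases rule: Os_snoc_cases)
      case (zero as')
      then show ?thesis
        using mc_append_left_le[of as' "[Os []]"] by (simp add: fs_snoc_zero)
    next
      case (succ as' bs)
      have "Os bs \<notin> set as'"
        using Os.prems succ olt_Os_snoc_zero[of bs] by (auto simp: wf_ord_append_iff)
      then have "mc (fs (Os as) x) \<le> max (mc (Os as')) (max x (mc (Os bs)))"
        using succ mc_append_replicate_le by (simp add: fs_snoc_succ)
      moreover have "mc (Os bs) \<le> mc (Os as)" and "mc (Os as') \<le> mc (Os as)"
        using succ mc_append_left_le[of bs "[Os []]"] mc_elem_le[of "Os (bs @ [Os []])" as]
          mc_append_left_le[of as'] by simp_all
      ultimately show ?thesis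
        by (auto simp: le_max_iff_disj)
    next
      case (limit as' bs)
      have "wf_ord (Os bs)" and below: "\<forall>a\<in>set as'. \<not> olt a (Os bs)"
        using Os.prems limit by (auto simp: wf_ord_append_iff)
      then have IH: "mc (fs (Os bs) x) \<le> max (mc (Os bs)) x"
        using Os.IH limit by simp
      have "fs (Os bs) x \<notin> set as'"
        using below olt_fs[of "Os bs" x] limit by auto
      then have "mc (fs (Os as) x) \<le> max (mc (Os as')) (max 1 (mc (fs (Os bs) x)))"
        using limit mc_append_replicate_le[of _ as' 1] by (simp add: fs_snoc_limit)
      moreover have "mc (Os bs) \<le> mc (Os as)" and "mc (Os as') \<le> mc (Os as)" and "1 \<le> mc (Os as)"
        using limit mc_elem_le[of "Os bs" as] mc_append_left_le[of as'] mc_pos[of as]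
        by auto
      ultimately show ?thesis
        using IH by linarith
    qed
  qed simp
qed

section \<open>The Bachmann property\<close>

lemma lexlt_replicate:
  assumes "wf_ord (Os (b # bs))" and "ole b d" and "count_list (b # bs) d < n"
  shows "lexlt (b # bs) (replicate n d)"
  using assms
proof (induction n arbitrary: b bs)
  case (Suc n)
  show ?case
  proof (cases "b = d")
    case True
    show ?thesis
    proof (cases bs)
      case Nil
      then show ?thesis
        using Suc.prems True by (cases n) auto
    next
      case (Cons b' bs')
      have "wf_ord (Os (b' # bs'))" and "\<not> olt b b'"
        using Suc.prems(1) Cons wf_ord_append_iff[of "[b]" "b' # bs'"] by auto
      moreover have "ole b' d"
        using True \<open>\<not> olt b b'\<close> olt_total by blast
      moreover have "count_list (b' # bs') d < n"
        using Suc.prems(3) True Cons by simp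
      ultimately show ?thesis
        using Suc.IH True Cons by simp
    qed
  qed (use Suc.prems in simp)
qed simp

lemma lexlt_fs_snoc_succ:
  assumes "wf_ord (Os bs)" and "mc (Os bs) < x" and "lexlt bs (as @ [Os (cs @ [Os []])])"
  shows "lexlt bs (as @ replicate x (Os cs))"
  using assms(3)
proof (cases rule: lexlt_snoc_cases)
  case (3 d ds)
  have "ole d (Os cs)"
    using 3 olt_Os_snoc_zero_imp_ole by simp
  moreover have "wf_ord (Os (d # ds))"
    using assms(1) 3 by (simp add: wf_ord_append_iff)
  moreover have "count_list (d # ds) (Os cs) < x"
    using count_list_le_mc[of bs "Os cs"] assms(2) 3 by simp
  ultimately show ?thesis
    using 3 lexlt_replicate by simp
qed (use assms(2) in \<open>auto intro: lexlt_append_right\<close>)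

theorem bachmann_property:
  assumes "wf_ord \<beta>" and "olt \<beta> \<alpha>" and "mc \<beta> < x"
  shows "olt \<beta> (fs \<alpha> x) \<or> \<beta> = fs \<alpha> x \<and> (\<exists>as. \<alpha> = Os (as @ [Os []]))"
  using assms
proof (induction \<alpha> arbitrary: \<beta>)
  case (Os as)
  obtain bs where \<beta>: "\<beta> = Os bs"
    by (cases \<beta>) auto
  have lt: "lexlt bs as"
    using Os.prems(2) \<beta> by (simp add: olt_Os)
  then have "as \<noteq> []"
    by auto
  then show ?case
  proof (cases rule: Os_snoc_cases)
    case (zero as')
    then show ?thesis
      using olt_Os_snoc_zero_imp_ole[of \<beta> as'] Os.prems(2) by (auto simp: fs_snoc_zero)
  next
    case (succ as' cs)
    then show ?thesis
      using lexlt_fs_snoc_succ[of bs x as' cs] lt Os.prems \<beta> by (simp add: fs_snoc_succ olt_Os)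
  next
    case (limit as' cs)
    from lt limit have "lexlt bs (as' @ [Os cs])"
      by simp
    then have "lexlt bs (as' @ [fs (Os cs) x])"
    proof (cases rule: lexlt_snoc_cases)
      case (3 d ds)
      have "wf_ord d"
        using Os.prems(1) \<beta> 3 wf_ord_Os_elem by auto
      moreover have "mc d < x"
        using mc_elem_le[of d bs] Os.prems(3) \<beta> 3 by simp
      ultimately have "olt d (fs (Os cs) x)"
        using Os.IH[of "Os cs" d] limit 3 by auto
      then show ?thesis
        using 3 by simp
    qed (auto intro: lexlt_append_right)
    then show ?thesis
      using limit \<beta> by (simp add: fs_snoc_limit olt_Os)
  qed
qed

lemma fs_iter_zero_below:
  assumes "fs_iter \<alpha> zs = Os []" and "ole \<beta> \<alpha>" and "wf_ord \<beta>"
    and "sorted_wrt (<) zs" and "\<forall>z\<in>set zs. mc \<beta> < z"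
  shows "fs_iter \<beta> zs = Os []"
  using assms
proof (induction zs arbitrary: \<alpha> \<beta>)
  case (Cons z zs)
  show ?case
  proof (cases "\<beta> = \<alpha> \<or> \<beta> = Os []")
    case False
    then have "olt \<beta> \<alpha>"
      using Cons.prems(2) by simp
    then have "ole \<beta> (fs \<alpha> z)"
      using bachmann_property[OF Cons.prems(3)] Cons.prems(5) by auto
    moreover have "olt (fs \<beta> z) \<beta>"
      using False olt_fs by blast
    ultimately have "olt (fs \<beta> z) (fs \<alpha> z)"
      using olt_trans by blast
    moreover have "\<forall>z'\<in>set zs. mc (fs \<beta> z) < z'"
      using mc_fs_le[OF Cons.prems(3), of z] Cons.prems(4,5) by fastforce
    ultimately have "fs_iter (fs \<beta> z) zs = Os []"
      using Cons.IH[of "fs \<alpha> z" "fs \<beta> z"] Cons.prems wf_ord_fs by simp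
    then show ?thesis
      by simp
  qed (use Cons.prems in auto)
qed simp

lemma sorted_drop_ge:
  "sorted_wrt (<) zs \<Longrightarrow> \<forall>z\<in>set zs. e \<le> z \<Longrightarrow> \<forall>z\<in>set (drop t zs). e + t \<le> (z::nat)"
proof (induction zs arbitrary: e t)
  case (Cons z zs)
  show ?case
  proof (cases t)
    case (Suc t')
    have "\<forall>w\<in>set zs. Suc e \<le> w"
      using Cons.prems by (auto simp: Suc_le_eq)
    then show ?thesis
      using Cons.IH[of "Suc e" t'] Cons.prems(1) Suc by simp
  qed (use Cons.prems in simp)
qed simp

lemma sorted_nth_gap:
  "sorted_wrt (<) xs \<Longrightarrow> p \<le> q \<Longrightarrow> q < length xs \<Longrightarrow> xs ! p + (q - p) \<le> (xs ! q :: nat)"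
proof (induction q)
  case (Suc q)
  show ?case
  proof (cases "p = Suc q")
    case False
    then have "xs ! p + (q - p) \<le> xs ! q"
      using Suc by simp
    moreover have "xs ! q < xs ! Suc q"
      using sorted_wrt_nth_less[OF Suc.prems(1)] Suc.prems(3) by simp
    ultimately show ?thesis
      using False Suc.prems(2) by simp
  qed simp
qed simp

lemma fs_iter_drop_zeros:
  assumes "as \<noteq> []" and "fs_iter (Os (as @ replicate n (Os []))) zs = Os []"
  shows "fs_iter (Os as) (drop n zs) = Os []"
  using assms(2)
proof (induction n arbitrary: zs)
  case (Suc n)
  then obtain z zs' where "zs = z # zs'"
    using assms(1) by (cases zs) auto
  with Suc show ?case
    using fs_snoc_zero[of "as @ replicate n (Os [])"] by (simp add: replicate_append_same[symmetric])
qed simp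

text \<open>The exponents \<open>Os [Os []]\<close> and \<open>Os [Os [], Os []]\<close> are \<open>1\<close> and \<open>2\<close>, so the
  notations below end in \<open>\<omega> \<cdot> n\<close> and \<open>\<omega>\<^sup>2 \<cdot> a\<close>.  Using up one \<open>\<omega>\<close> takes an
  element \<open>z\<close> and then \<open>z\<close> further ones, so the elements at least double; using up one
  \<open>\<omega>\<^sup>2\<close> takes \<open>z\<close> and then \<open>\<omega> \<cdot> z\<close>, so they grow beyond \<open>2\<^sup>z\<close>.\<close>
lemma fs_iter_drop_omega_mult:
  assumes "as \<noteq> []" and "sorted_wrt (<) zs" and "\<forall>z\<in>set zs. e \<le> z"
    and "fs_iter (Os (as @ replicate n (Os [Os []]))) zs = Os []"
  shows "\<exists>t. fs_iter (Os as) (drop t zs) = Os [] \<and> (\<forall>z\<in>set (drop t zs). 2 ^ n * e \<le> z)"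
  using assms(2-)
proof (induction n arbitrary: zs e)
  case (Suc n)
  then obtain z zs' where zs: "zs = z # zs'"
    using assms(1) by (cases zs) auto
  have "fs_iter (Os ((as @ replicate n (Os [Os []])) @ replicate z (Os []))) zs' = Os []"
    using Suc.prems(3) zs fs_snoc_succ[of "as @ replicate n (Os [Os []])" "[]" z]
    by (simp add: replicate_append_same[symmetric])
  then have "fs_iter (Os (as @ replicate n (Os [Os []]))) (drop z zs') = Os []"
    using assms(1) fs_iter_drop_zeros by simp
  moreover have "\<forall>w\<in>set (drop z zs'). 2 * e \<le> w"
    using sorted_drop_ge[of zs' "Suc z" z] Suc.prems(1,2) zs by fastforce
  moreover have "sorted_wrt (<) (drop z zs')"
    using Suc.prems(1) zs by simp
  ultimately obtain t where "fs_iter (Os as) (drop t (drop z zs')) = Os []"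
    and "\<forall>w\<in>set (drop t (drop z zs')). 2 ^ n * (2 * e) \<le> w"
    using Suc.IH by blast
  then show ?case
    using zs by (intro exI[of _ "Suc (t + z)"]) (simp add: ac_simps)
qed (intro exI[of _ 0], simp)

lemma fs_iter_omega2_step:
  assumes "2 \<le> a" and "sorted_wrt (<) zs" and "\<forall>z\<in>set zs. e \<le> z"
    and "fs_iter (Os (as @ replicate a (Os [Os [], Os []]))) zs = Os []"
  shows "\<exists>t. fs_iter (Os (as @ replicate (a - 1) (Os [Os [], Os []]))) (drop t zs) = Os []
           \<and> (\<forall>z\<in>set (drop t zs). 2 ^ e \<le> z)"
proof -
  obtain z zs' where zs: "zs = z # zs'"
    using assms(1,4) by (cases zs) auto
  obtain a' where a': "a = Suc a'"
    using assms(1) by (cases a) auto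
  have "fs (Os (as @ replicate a (Os [Os [], Os []]))) z
      = Os ((as @ replicate a' (Os [Os [], Os []])) @ replicate z (Os [Os []]))"
    using a' fs_snoc_succ[of "as @ replicate a' (Os [Os [], Os []])" "[Os []]" z]
    by (simp add: replicate_append_same[symmetric])
  then have "fs_iter (Os ((as @ replicate a' (Os [Os [], Os []])) @ replicate z (Os [Os []]))) zs'
      = Os []"
    using assms(4) zs by simp
  moreover have "as @ replicate a' (Os [Os [], Os []]) \<noteq> []"
    using assms(1) a' by simp
  moreover have "sorted_wrt (<) zs'" and "\<forall>w\<in>set zs'. Suc z \<le> w"
    using assms(2) zs by (auto simp: Suc_le_eq)
  ultimately obtain t where t: "fs_iter (Os (as @ replicate a' (Os [Os [], Os []]))) (drop t zs') = Os []"
    and "\<forall>w\<in>set (drop t zs'). 2 ^ z * Suc z \<le> w"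
    using fs_iter_drop_omega_mult by blast
  moreover have "(2::nat) ^ e \<le> 2 ^ z * Suc z"
    using assms(3) zs power_increasing[of e z "2::nat"] by (simp add: trans_le_add1)
  ultimately have "\<forall>w\<in>set (drop t zs'). 2 ^ e \<le> w"
    using le_trans by blast
  then show ?thesis
    using t a' zs by (intro exI[of _ "Suc t"]) simp
qed

lemma fs_iter_omega2_steps:
  assumes "n < a" and "sorted_wrt (<) zs" and "\<forall>z\<in>set zs. e \<le> z"
    and "fs_iter (Os (as @ replicate a (Os [Os [], Os []]))) zs = Os []"
  shows "\<exists>t. fs_iter (Os (as @ replicate (a - n) (Os [Os [], Os []]))) (drop t zs) = Os []
           \<and> (\<forall>z\<in>set (drop t zs). ((^) 2 ^^ n) e \<le> z)"
  using assms(1)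
proof (induction n)
  case (Suc n)
  then obtain t where "fs_iter (Os (as @ replicate (a - n) (Os [Os [], Os []]))) (drop t zs) = Os []"
    and "\<forall>z\<in>set (drop t zs). ((^) 2 ^^ n) e \<le> z"
    by auto
  moreover have "sorted_wrt (<) (drop t zs)"
    using assms(2) by simp
  moreover have "2 \<le> a - n"
    using Suc.prems by simp
  ultimately obtain t' where
    "fs_iter (Os (as @ replicate (a - n - 1) (Os [Os [], Os []]))) (drop t' (drop t zs)) = Os []"
    and "\<forall>z\<in>set (drop t' (drop t zs)). 2 ^ ((^) 2 ^^ n) e \<le> z"
    using fs_iter_omega2_step by blast
  then show ?case
    by (intro exI[of _ "t' + t"]) simp
qed (use assms in \<open>intro exI[of _ 0], simp\<close>)

section \<open>The notations \<open>\<Phi>(\<gamma>)\<close>\<close>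

text \<open>\<open>\<omega>\<^sup>3 \<cdot> \<omega>\<^sup>\<gamma> = \<omega>\<^bsup>3 + \<gamma>\<^esup>\<close>: multiplication by \<open>\<omega>\<^sup>3\<close> applies
  \<open>three_plus\<close> to every exponent.\<close>
definition three_plus :: "ord \<Rightarrow> ord" where
  "three_plus \<gamma> = oadd (onat 3) \<gamma>"

lemma onat_3: "onat 3 = Os [Os [], Os [], Os []]"
  by (simp add: onat_def numeral_eq_Suc)

lemma three_plus_zero [simp]: "three_plus (Os []) = Os [Os [], Os [], Os []]"
  by (simp add: three_plus_def onat_3)

lemma three_plus_Os_zero: "three_plus (Os (Os [] # bs)) = Os (Os [] # Os [] # Os [] # Os [] # bs)"
  by (simp add: three_plus_def onat_3 olt_irrefl)

lemma three_plus_Os_pos: "b \<noteq> Os [] \<Longrightarrow> three_plus (Os (b # bs)) = Os (b # bs)"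
  using olt_zero_left[of b] by (simp add: three_plus_def onat_3)

lemma ord_head_cases:
  obtains "\<gamma> = Os []" | bs where "\<gamma> = Os (Os [] # bs)" | b bs where "\<gamma> = Os (b # bs)" "b \<noteq> Os []"
  by (metis list.exhaust ord.exhaust)

lemma three_plus_ne_zero: "three_plus \<gamma> \<noteq> Os []"
  by (cases \<gamma> rule: ord_head_cases) (auto simp: three_plus_Os_zero three_plus_Os_pos)

lemma not_olt_three_plus: "\<not> olt (three_plus \<gamma>) (Os [Os [], Os [], Os []])"
  by (cases \<gamma> rule: ord_head_cases) (auto simp: three_plus_Os_zero three_plus_Os_pos olt_irrefl olt_Os)

lemma olt_three_plus: "\<gamma> \<noteq> Os [] \<Longrightarrow> olt (Os [Os [], Os [], Os []]) (three_plus \<gamma>)"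
  by (cases \<gamma> rule: ord_head_cases)
    (auto simp: three_plus_Os_zero three_plus_Os_pos olt_Os intro: olt_zero_left)

lemma three_plus_mono:
  assumes "olt \<gamma> \<delta>"
  shows "olt (three_plus \<gamma>) (three_plus \<delta>)"
proof (cases \<gamma> rule: ord_head_cases)
  case 1
  then have "\<delta> \<noteq> Os []"
    using assms olt_irrefl by blast
  then show ?thesis
    using 1 olt_three_plus by simp
next
  case (2 bs)
  show ?thesis
  proof (cases \<delta> rule: ord_head_cases)
    case 1
    then show ?thesis
      using assms by simp
  next
    case (2 ds)
    then show ?thesis
      using assms \<open>\<gamma> = Os (Os [] # bs)\<close> by (simp add: three_plus_Os_zero olt_Os)
  next
    case (3 d ds)
    then show ?thesis
      using \<open>\<gamma> = Os (Os [] # bs)\<close> olt_zero_left[of d]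
      by (simp add: three_plus_Os_zero three_plus_Os_pos olt_Os)
  qed
next
  case (3 b bs)
  show ?thesis
  proof (cases \<delta> rule: ord_head_cases)
    case 1
    then show ?thesis
      using assms by simp
  next
    case (2 ds)
    then show ?thesis
      using assms 3 by (simp add: olt_Os)
  next
    case (3 d ds)
    then show ?thesis
      using assms \<open>\<gamma> = Os (b # bs)\<close> \<open>b \<noteq> Os []\<close> by (simp add: three_plus_Os_pos)
  qed
qed

lemma three_plus_inj: "three_plus \<gamma> = three_plus \<delta> \<Longrightarrow> \<gamma> = \<delta>"
  using three_plus_mono olt_total olt_irrefl by metis

lemma wf_ord_three_plus: "wf_ord \<gamma> \<Longrightarrow> wf_ord (three_plus \<gamma>)"
proof (cases \<gamma> rule: ord_head_cases)
  case (2 bs)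
  moreover assume "wf_ord \<gamma>"
  moreover have "wf_ord (Os ([Os []] @ bs)) \<Longrightarrow> \<forall>b\<in>set bs. \<not> olt (Os []) b"
    by (simp only: wf_ord_append_iff) simp
  ultimately have "wf_ord (Os (replicate 3 (Os []) @ Os [] # bs))"
    by (simp add: wf_ord_append_iff wf_ord_replicate)
  with 2 show ?thesis
    by (simp add: three_plus_Os_zero numeral_eq_Suc)
qed (auto simp: three_plus_Os_pos)

lemma mc_three_plus_le: "mc (three_plus \<gamma>) \<le> mc \<gamma> + 3"
proof (cases \<gamma> rule: ord_head_cases)
  case 1
  then show ?thesis
    using mc_replicate_le[of 3 "Os []"] by (simp add: numeral_eq_Suc)
next
  case (2 bs)
  then show ?thesis
    using mc_append_le[of "replicate 3 (Os [])" "Os [] # bs"] mc_replicate_le[of 3 "Os []"]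
    by (simp add: three_plus_Os_zero numeral_eq_Suc)
qed (simp add: three_plus_Os_pos)

lemma mc_map_three_plus_le: "mc (Os (map three_plus as)) \<le> mc (Os as) + 3"
proof -
  have count: "count_list (map three_plus as) (three_plus a) = count_list as a" for a
    by (induction as) (auto dest: three_plus_inj)
  show ?thesis
    unfolding mc_le_iff
  proof
    fix b
    assume "b \<in> set (map three_plus as)"
    then obtain a where "a \<in> set as" and b: "b = three_plus a"
      by auto
    then show "count_list (map three_plus as) b \<le> mc (Os as) + 3 \<and> mc b \<le> mc (Os as) + 3"
      using count count_list_le_mc[of as a] mc_three_plus_le[of a] mc_elem_le[of a as] by simp
  qed
qed

lemma omul_oomega3: "omul oomega3 (Os cs) = Os (map three_plus cs)"
  by (induction cs) (auto simp: omul_pow_def oomega3_def onat_3 three_plus_def)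

text \<open>\<open>\<Phi>(\<gamma>) = \<omega>\<^sup>3 \<cdot> (\<gamma> + 1) + (l + 2)\<close>.\<close>
lemma Phi_Os: "Phi l (Os cs) = Os (map three_plus (cs @ [Os []]) @ replicate (l + 2) (Os []))"
proof -
  have "oadd (Os (map three_plus cs)) oomega3 = Os (map three_plus (cs @ [Os []]))"
    using not_olt_three_plus by (simp add: oomega3_def onat_3)
  moreover have "oadd (Os as) (onat n) = Os (as @ replicate n (Os []))" for as n
    by (cases n) (simp_all add: onat_def)
  ultimately show ?thesis
    unfolding Phi_def omul_oomega3 by (simp only: append_assoc replicate_add)
qed

lemma wf_ord_Phi:
  assumes "wf_ord \<gamma>"
  shows "wf_ord (Phi l \<gamma>)"
proof (cases \<gamma>)
  case (Os cs)
  then have "wf_ord (Os (cs @ [Os []]))"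
    using assms by (simp add: wf_ord_append_iff)
  then have "wf_ord (Os (map three_plus (cs @ [Os []])))"
    by (rule wf_ord_map) (simp_all add: three_plus_mono wf_ord_three_plus)
  then show ?thesis
    unfolding Os Phi_Os by (rule wf_ord_append_zeros)
qed

lemma mc_Phi_le: "mc (Phi l \<gamma>) \<le> max (mc \<gamma> + 4) (l + 2)"
proof (cases \<gamma>)
  case (Os cs)
  have "set (map three_plus (cs @ [Os []])) \<inter> set (replicate (l + 2) (Os [])) = {}"
    using three_plus_ne_zero by (fastforce dest: sym)
  then have "mc (Phi l \<gamma>)
      \<le> max (mc (Os (map three_plus (cs @ [Os []])))) (mc (Os (replicate (l + 2) (Os []))))"
    unfolding Os Phi_Os by (rule mc_append_disjoint_le)
  moreover have "mc (Os (map three_plus (cs @ [Os []]))) \<le> mc \<gamma> + 4"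
    using Os mc_map_three_plus_le[of "cs @ [Os []]"] mc_append_le[of cs "[Os []]"]
      mc_replicate_le[of 1 "Os []"] by simp
  ultimately show ?thesis
    using mc_replicate_le[of "l + 2" "Os []"] by simp
qed

lemma Phi_less:
  assumes "olt \<gamma> (Os cs)" and "0 < m"
  shows "olt (Phi l \<gamma>) (Os (map three_plus cs @ replicate m (Os [Os [], Os []])))"
proof -
  obtain cs' where \<gamma>: "\<gamma> = Os cs'"
    by (cases \<gamma>) auto
  have "cs' @ [Os []] = cs \<or> lexlt (cs' @ [Os []]) cs"
    using assms(1) \<gamma> lexlt_snoc_zero by (simp add: olt_Os)
  then have "map three_plus (cs' @ [Os []]) = map three_plus cs
      \<or> lexlt (map three_plus (cs' @ [Os []])) (map three_plus cs)"
    using lexlt_map[of three_plus] three_plus_mono by blast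
  moreover have "replicate m (Os [Os [], Os []]) \<noteq> []"
    using assms(2) by simp
  moreover have "\<forall>b\<in>set (map three_plus cs @ replicate m (Os [Os [], Os []])). olt (Os []) b"
    using three_plus_ne_zero olt_zero_left by auto
  ultimately have "lexlt (map three_plus (cs' @ [Os []]) @ Os [] # replicate (Suc l) (Os []))
      (map three_plus cs @ replicate m (Os [Os [], Os []]))"
    by (rule lexlt_append_below)
  moreover have "replicate (l + 2) (Os []) = Os [] # replicate (Suc l) (Os [])"
    by simp
  ultimately show ?thesis
    unfolding \<gamma> Phi_Os olt_Os by simp
qed

lemma fs_iter_Phi:
  assumes "fs_iter (Phi l (Os cs)) xs = Os []"
  shows "l + 2 < length xs"
    and "fs_iter (Os (map three_plus cs @ replicate (xs ! (l + 2)) (Os [Os [], Os []])))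
           (drop (Suc (l + 2)) xs) = Os []"
proof -
  have large: "fs_iter (Os (map three_plus cs @ [Os ([Os [], Os []] @ [Os []])])) (drop (l + 2) xs)
      = Os []"
    using assms fs_iter_drop_zeros by (simp add: Phi_Os)
  then show len: "l + 2 < length xs"
    by (cases "l + 2 < length xs") auto
  then have "drop (l + 2) xs = xs ! (l + 2) # drop (Suc (l + 2)) xs"
    by (rule Cons_nth_drop_Suc[symmetric])
  with large show "fs_iter (Os (map three_plus cs @ replicate (xs ! (l + 2)) (Os [Os [], Os []])))
      (drop (Suc (l + 2)) xs) = Os []"
    by (simp only: fs_iter_Cons fs_snoc_succ)
qed

lemma E_mono: "x \<le> y \<Longrightarrow> E x \<le> E y"
  by (simp add: E_def)

lemma less_E: "n < E n"
  unfolding E_def using less_exp[of n] less_exp[of "2 ^ n"] less_exp[of "2 ^ 2 ^ n"] by linarith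

lemma E_add_four_less: "E n + 4 < E (Suc n)"
proof -
  define B :: nat where "B = 2 ^ 2 ^ n"
  have "2 \<le> B"
    using power_increasing[of 1 "2 ^ n" "2::nat"] by (simp add: B_def)
  then have "B + 2 \<le> B * B"
    using mult_le_mono1[of 2 B B] by linarith
  then have "(2::nat) ^ (B + 2) \<le> 2 ^ (B * B)"
    by (rule power_increasing) simp
  then have "4 * 2 ^ B \<le> (2::nat) ^ (B * B)"
    by (simp add: power_add)
  moreover have "(4::nat) \<le> 2 ^ B"
    using power_increasing[OF \<open>2 \<le> B\<close>, of "2::nat"] by simp
  moreover have "E n = 2 ^ B"
    by (simp only: E_def B_def)
  moreover have "(2::nat) ^ 2 ^ Suc n = B * B"
    by (simp add: B_def power_mult[symmetric] mult_2 power_add)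
  then have "E (Suc n) = 2 ^ (B * B)"
    by (simp only: E_def)
  ultimately show ?thesis
    by linarith
qed

lemma E_funpow: "E n = ((^) 2 ^^ 3) n"
  by (simp add: E_def numeral_3_eq_3)

section \<open>The descent argument\<close>

lemma fs_iter_Phi_descent:
  assumes xs: "sorted_wrt (<) xs" "\<forall>x\<in>set xs. 2 < x"
    and large: "fs_iter (Phi l \<gamma>) xs = Os []"
    and \<gamma>': "wf_ord \<gamma>'" "olt \<gamma>' \<gamma>" "mc \<gamma>' \<le> E (xs ! 1 + l)"
  shows "\<exists>t>0. fs_iter (Phi l \<gamma>') (drop t xs) = Os []"
proof -
  obtain cs where \<gamma>: "\<gamma> = Os cs"
    by (cases \<gamma>) auto
  define u where "u = xs ! (l + 2)"
  define zs where "zs = drop (Suc (l + 2)) xs"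
  have len: "l + 2 < length xs"
    and tail: "fs_iter (Os (map three_plus cs @ replicate u (Os [Os [], Os []]))) zs = Os []"
    using fs_iter_Phi large \<gamma> by (simp_all add: u_def zs_def)
  have "xs ! 1 + l + 1 \<le> u" and "xs ! 0 + l + 2 \<le> u"
    using sorted_nth_gap[OF xs(1), of 1 "l + 2"] sorted_nth_gap[OF xs(1), of 0 "l + 2"] len
    by (simp_all add: u_def)
  moreover have "xs ! 0 \<in> set xs"
    using len by (intro nth_mem) linarith
  then have "2 < xs ! 0"
    using xs(2) by blast
  ultimately have u: "xs ! 1 + l < u" "3 < u"
    by simp_all
  have "sorted_wrt (<) zs" and "\<forall>z\<in>set zs. Suc u \<le> z"
    using xs(1) len sorted_wrt_nth_less[OF xs(1), of "l + 2"]
    by (auto simp: zs_def u_def in_set_conv_nth Suc_le_eq)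
  then obtain t where t: "fs_iter (Os (map three_plus cs @ replicate (u - 3) (Os [Os [], Os []])))
        (drop t zs) = Os []"
    and big: "\<forall>z\<in>set (drop t zs). E (Suc u) \<le> z"
    using fs_iter_omega2_steps[OF u(2) _ _ tail] unfolding E_funpow by blast
  have "mc \<gamma>' + 4 < E (Suc u)"
    using \<gamma>'(3) E_add_four_less[of "xs ! 1 + l"] E_mono[of "Suc (xs ! 1 + l)" "Suc u"] u(1) by simp
  moreover have "l + 2 < E (Suc u)"
    using less_E[of "Suc u"] u(1) by simp
  ultimately have "\<forall>z\<in>set (drop t zs). mc (Phi l \<gamma>') < z"
    using mc_Phi_le[of l \<gamma>'] big by fastforce
  moreover have "olt (Phi l \<gamma>') (Os (map three_plus cs @ replicate (u - 3) (Os [Os [], Os []])))"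
    using Phi_less \<gamma>'(2) \<gamma> u(2) by simp
  ultimately have "fs_iter (Phi l \<gamma>') (drop t zs) = Os []"
    using fs_iter_zero_below[OF t] wf_ord_Phi[OF \<gamma>'(1)] \<open>sorted_wrt (<) zs\<close> by simp
  then show ?thesis
    by (intro exI[of _ "t + Suc (l + 2)"]) (simp add: zs_def)
qed

lemma fs_iter_Phi_descending_chain:
  assumes xs: "sorted_wrt (<) xs" "\<forall>x\<in>set xs. 2 < x"
    and large: "fs_iter (Phi l (\<gamma> 0)) xs = Os []"
    and wf: "\<forall>i\<le>j. wf_ord (\<gamma> i)"
    and desc: "\<forall>i<j. olt (\<gamma> (Suc i)) (\<gamma> i)"
    and mc: "\<forall>i\<le>j. i < length xs \<longrightarrow> mc (\<gamma> i) \<le> E (xs ! i + l)"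
  shows "j < length xs"
proof -
  have "\<exists>k\<ge>i. fs_iter (Phi l (\<gamma> i)) (drop k xs) = Os []" if "i \<le> j" for i
    using that
  proof (induction i)
    case 0
    show ?case
      using large by (intro exI[of _ 0]) simp
  next
    case (Suc i)
    then obtain k where k: "i \<le> k" "fs_iter (Phi l (\<gamma> i)) (drop k xs) = Os []"
      by auto
    have "k + 1 < length xs"
      using fs_iter_Phi(1)[of l] k(2) by (cases "\<gamma> i") fastforce
    then have "xs ! Suc i \<le> drop k xs ! 1"
      using sorted_nth_gap[OF xs(1), of "Suc i" "k + 1"] k(1) by simp
    moreover have "mc (\<gamma> (Suc i)) \<le> E (xs ! Suc i + l)"
      using mc Suc.prems \<open>k + 1 < length xs\<close> k(1) by simp
    ultimately have "mc (\<gamma> (Suc i)) \<le> E (drop k xs ! 1 + l)"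
      using E_mono[of "xs ! Suc i + l" "drop k xs ! 1 + l"] by simp
    then obtain t where "0 < t" "fs_iter (Phi l (\<gamma> (Suc i))) (drop t (drop k xs)) = Os []"
      using fs_iter_Phi_descent[of "drop k xs" l "\<gamma> i" "\<gamma> (Suc i)"] xs k(2) wf desc Suc.prems
      by (auto dest: in_set_dropD)
    then show ?case
      using k(1) by (intro exI[of _ "t + k"]) simp
  qed
  then obtain k where "j \<le> k" "fs_iter (Phi l (\<gamma> j)) (drop k xs) = Os []"
    by blast
  then show ?thesis
    using fs_iter_Phi(1)[of l] by (cases "\<gamma> j") fastforce
qed

theorem lemma3p1:
  fixes l j :: nat and X :: "nat set" and \<gamma> :: "nat \<Rightarrow> ord"
  assumes "finite X"
    and "\<forall>x\<in>X. x > 2"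
    and "large (Phi l (\<gamma> 0)) X"
    and "\<forall>i\<le>j. wf_ord (\<gamma> i)"
    and "\<forall>i<j. olt (\<gamma> (Suc i)) (\<gamma> i)"
    and "\<forall>i\<le>j. i < card X \<longrightarrow> mc (\<gamma> i) \<le> E (sorted_list_of_set X ! i + l)"
  shows "j < card X"
  using fs_iter_Phi_descending_chain[of "sorted_list_of_set X" l \<gamma> j] assms
  by (simp add: large_def)

end
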